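(* For integers $N\ge 1$ and $n\ge 1$, $$B_{N,n}=(-1)^n\,n!\,\det\big(c_{ij}\big)_{1\le i,j\le n},$$ where $c_{ij}=\dfrac{N!}{(N+i-j+1)!}$ if $j\le i$, $c_{ij}=1$ if $j=i+1$, and $c_{ij}=0$ if $j>i+1$. That is, the matrix has $\frac{N!}{(N+1)!}$ on the diagonal, $1$ on the superdiagonal, zeros above the superdiagonal, and $\frac{N!}{(N+k+1)!}$ on the $k$-th subdiagonal.
   Context: For a positive integer $N$, the hypergeometric Bernoulli numbers $B_{N,n}$ ($n\ge 0$) are defined by $$\frac{x^N/N!}{e^x-\sum_{n=0}^{N-1}x^n/n!}=\sum_{n=0}^\infty B_{N,n}\frac{x^n}{n!}.$$ *)

theory Defs
  imports "HOL-Computational_Algebra.Formal_Power_Series" "Jordan_Normal_Form.Determinant"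
begin

definition hyp_bernoulli :: "nat \<Rightarrow> nat \<Rightarrow> real" where
  "hyp_bernoulli N n = fact n * fps_nth
     ((fps_X ^ N / fps_const (fact N)) /
      (fps_exp 1 - (\<Sum>k<N. fps_const (1 / fact k) * fps_X ^ k))) n"

text \<open>The n x n matrix (c_ij) (0-based indices; entries depend only on i - j).\<close>
definition hb_matrix :: "nat \<Rightarrow> nat \<Rightarrow> real mat" where
  "hb_matrix N n = mat n n (\<lambda>(i, j).
     if j \<le> i then fact N / fact (N + (i - j) + 1)
     else if j = i + 1 then 1 else 0)"

end

theory Submission
  imports Defs
begin

text \<open>
  Let \<open>F(x) = \<Sum>\<^sub>m N!/(N+m)! x^m\<close>. Then \<open>e^x - \<Sum>\<^sub>k\<^sub><\<^sub>N x^k/k! = x^N F(x)/N!\<close>, so the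
  generating function of the \<open>B_{N,n}/n!\<close> is \<open>1/F\<close>. As \<open>F(0) = 1\<close>, the coefficients of
  \<open>1/F\<close> obey \<open>g_{n+1} = - \<Sum>\<^sub>i\<^sub>\<le>\<^sub>n F_{i+1} g_{n-i}\<close>. Expanding along the first column,
  \<open>(-1)^n\<close> times the determinant of the lower Hessenberg Toeplitz matrix with entries
  \<open>F_1, F_2, \<dots>\<close> and unit superdiagonal satisfies the same recurrence, since each minor is
  block lower triangular with a unitriangular upper left block.
\<close>

definition unit_hessenberg_toeplitz :: "(nat \<Rightarrow> 'a::{zero,one}) \<Rightarrow> nat \<Rightarrow> 'a mat" where
  "unit_hessenberg_toeplitz f n = mat n n (\<lambda>(i, j).
     if j \<le> i then f (i - j) else if j = i + 1 then 1 else 0)"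

lemma det_lower_unitriangular:
  fixes A :: "'a::comm_ring_1 mat"
  assumes "A \<in> carrier_mat n n"
    and "\<And>i. i < n \<Longrightarrow> A $$ (i, i) = 1"
    and "\<And>i j. i < j \<Longrightarrow> j < n \<Longrightarrow> A $$ (i, j) = 0"
  shows "det A = 1"
proof -
  have "det A = prod_list (diag_mat A)"
    using assms(3,1) by (rule det_lower_triangular)
  also have "diag_mat A = replicate n 1"
    using assms(1,2) by (auto simp: diag_mat_def intro!: nth_equalityI)
  finally show ?thesis by simp
qed

lemma det_unit_hessenberg_toeplitz_0: "det (unit_hessenberg_toeplitz f 0) = 1"
proof -
  have "unit_hessenberg_toeplitz f 0 = 1\<^sub>m 0"
    by (intro eq_matI) (auto simp: unit_hessenberg_toeplitz_def)
  then show ?thesis by simp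
qed

lemma det_minor_unit_hessenberg_toeplitz:
  fixes f :: "nat \<Rightarrow> 'a::idom"
  assumes "i \<le> m"
  shows "det (mat_delete (unit_hessenberg_toeplitz f (Suc m)) i 0)
    = det (unit_hessenberg_toeplitz f (m - i))"
proof -
  define L :: "'a mat" where
    "L = mat i i (\<lambda>(r, c). if c < r then f (r - Suc c) else if c = r then 1 else 0)"
  let ?H = "unit_hessenberg_toeplitz f (m - i)"
  have "mat_delete (unit_hessenberg_toeplitz f (Suc m)) i 0 =
      four_block_mat L (0\<^sub>m i (m - i)) (mat (m - i) i (\<lambda>(r, c). f (r + i - c))) ?H"
    using assms
    by (intro eq_matI) (auto simp: mat_delete_def unit_hessenberg_toeplitz_def L_def)
  also have "det \<dots> = det L * det ?H"
    by (rule det_four_block_mat_upper_right_zero) (auto simp: L_def unit_hessenberg_toeplitz_def)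
  moreover have "det L = 1"
    by (rule det_lower_unitriangular[of _ i]) (auto simp: L_def)
  ultimately show ?thesis by simp
qed

lemma det_unit_hessenberg_toeplitz_Suc:
  fixes f :: "nat \<Rightarrow> 'a::idom"
  shows "det (unit_hessenberg_toeplitz f (Suc m))
    = (\<Sum>i\<le>m. (-1) ^ i * f i * det (unit_hessenberg_toeplitz f (m - i)))"
proof -
  let ?H = "unit_hessenberg_toeplitz f (Suc m)"
  have "det ?H = (\<Sum>i<Suc m. ?H $$ (i, 0) * cofactor ?H i 0)"
    by (rule laplace_expansion_column) (simp_all add: unit_hessenberg_toeplitz_def)
  also have "\<dots> = (\<Sum>i\<le>m. (-1) ^ i * f i * det (unit_hessenberg_toeplitz f (m - i)))"
    unfolding lessThan_Suc_atMost
  proof (rule sum.cong[OF refl])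
    fix i assume "i \<in> {..m}"
    then show "?H $$ (i, 0) * cofactor ?H i 0
        = (-1) ^ i * f i * det (unit_hessenberg_toeplitz f (m - i))"
      by (simp add: cofactor_def det_minor_unit_hessenberg_toeplitz)
         (simp add: unit_hessenberg_toeplitz_def)
  qed
  finally show ?thesis .
qed

lemma signed_det_unit_hessenberg_toeplitz_Suc:
  fixes f :: "nat \<Rightarrow> 'a::idom"
  shows "(-1) ^ Suc m * det (unit_hessenberg_toeplitz f (Suc m))
    = - (\<Sum>i\<le>m. f i * ((-1) ^ (m - i) * det (unit_hessenberg_toeplitz f (m - i))))"
proof -
  have "(-1) ^ Suc m * (-1) ^ i = - ((-1) ^ (m - i) :: 'a)" if "i \<le> m" for i
  proof -
    obtain d where "m = i + d" using \<open>i \<le> m\<close> le_Suc_ex by blast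
    then show ?thesis by (simp add: power_add)
  qed
  then show ?thesis
    unfolding det_unit_hessenberg_toeplitz_Suc sum_distrib_left sum_negf[symmetric]
    by (intro sum.cong refl) (simp add: mult_ac)
qed

lemma fps_inverse_nth_Suc:
  fixes F :: "'a::field fps"
  assumes "fps_nth F 0 = 1"
  shows "fps_nth (inverse F) (Suc n)
    = - (\<Sum>i\<le>n. fps_nth F (Suc i) * fps_nth (inverse F) (n - i))"
proof -
  have "0 = fps_nth (F * inverse F) (Suc n)"
    using assms by (simp add: inverse_mult_eq_1')
  also have "\<dots> = fps_nth (inverse F) (Suc n)
      + (\<Sum>i\<le>n. fps_nth F (Suc i) * fps_nth (inverse F) (n - i))"
    unfolding fps_mult_nth sum.atLeast0_atMost_Suc_shift
    using assms by (simp add: atMost_atLeast0)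
  finally show ?thesis by (simp add: eq_neg_iff_add_eq_0)
qed

lemma fps_inverse_nth_eq_det:
  fixes F :: "'a::field fps"
  assumes "fps_nth F 0 = 1"
  shows "fps_nth (inverse F) n
    = (-1) ^ n * det (unit_hessenberg_toeplitz (\<lambda>k. fps_nth F (Suc k)) n)"
proof (induction n rule: less_induct)
  case (less n)
  show ?case
  proof (cases n)
    case 0
    with assms show ?thesis by (simp add: det_unit_hessenberg_toeplitz_0)
  next
    case (Suc m)
    let ?H = "unit_hessenberg_toeplitz (\<lambda>k. fps_nth F (Suc k))"
    have "fps_nth (inverse F) (Suc m)
        = - (\<Sum>i\<le>m. fps_nth F (Suc i) * ((-1) ^ (m - i) * det (?H (m - i))))"
      using less.IH Suc by (simp add: fps_inverse_nth_Suc[OF assms])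
    also have "\<dots> = (-1) ^ Suc m * det (?H (Suc m))"
      by (rule signed_det_unit_hessenberg_toeplitz_Suc[symmetric])
    finally show ?thesis using Suc by simp
  qed
qed

lemma fps_exp_minus_taylor_polynomial:
  "(fps_exp 1 - (\<Sum>k<N. fps_const (1 / fact k) * fps_X ^ k) :: 'a::field_char_0 fps)
    = fps_const (1 / fact N) * Abs_fps (\<lambda>m. fact N / fact (N + m)) * fps_X ^ N"
  (is "?L = ?R")
proof (rule fps_ext)
  fix n
  have "fps_nth ?L n = (if n < N then 0 else 1 / fact n)"
    by (simp add: fps_sum_nth if_distrib[of "\<lambda>x. x / _"] cong: if_cong)
  then show "fps_nth ?L n = fps_nth ?R n"
    by (simp add: fps_X_power_mult_right_nth)
qed

lemma hyp_bernoulli_generating_function: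
  "(fps_X ^ N / fps_const (fact N))
      / (fps_exp 1 - (\<Sum>k<N. fps_const (1 / fact k) * fps_X ^ k))
    = inverse (Abs_fps (\<lambda>m. fact N / fact (N + m)) :: 'a::field_char_0 fps)"
proof -
  let ?F = "Abs_fps (\<lambda>m. fact N / fact (N + m)) :: 'a fps"
  let ?h = "fps_const (1 / fact N) * fps_X ^ N :: 'a fps"
  have "fps_X ^ N / fps_const (fact N) = 1 * ?h"
    by (simp add: inverse_eq_divide mult.commute)
  moreover have "fps_exp 1 - (\<Sum>k<N. fps_const (1 / fact k) * fps_X ^ k) = ?F * ?h"
    unfolding fps_exp_minus_taylor_polynomial by (simp only: mult_ac)
  moreover have "?h \<noteq> 0"
  proof
    assume "?h = 0"
    then have "fps_nth ?h N = 0" by simp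
    then show False by simp
  qed
  ultimately show ?thesis
    by (simp add: fps_divide_cancel fps_divide_unit)
qed

theorem theorem1:
  fixes N n :: nat
  assumes "N \<ge> 1" and "n \<ge> 1"
  shows "hyp_bernoulli N n = (-1) ^ n * fact n * det (hb_matrix N n)"
proof -
  let ?F = "Abs_fps (\<lambda>m. fact N / fact (N + m)) :: real fps"
  have "(\<lambda>k. fps_nth ?F (Suc k)) = (\<lambda>k. fact N / fact (N + k + 1))"
    by simp
  then have "hb_matrix N n = unit_hessenberg_toeplitz (\<lambda>k. fps_nth ?F (Suc k)) n"
    by (simp only: hb_matrix_def unit_hessenberg_toeplitz_def)
  moreover have "fps_nth (inverse ?F) n
      = (-1) ^ n * det (unit_hessenberg_toeplitz (\<lambda>k. fps_nth ?F (Suc k)) n)"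
    by (rule fps_inverse_nth_eq_det) simp
  ultimately show ?thesis
    unfolding hyp_bernoulli_def hyp_bernoulli_generating_function by simp
qed

end
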